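(* For every integer $n\ge0$ and real $x$, $$\mathfrak{C}_{n+1}(x)=x\sum_{k=0}^{\lfloor n/2\rfloor}4^{-k}\binom{n+1}{2k+1}\mathfrak{C}_{n-2k}(x).$$
   Context: For $n\ge1$ the central factorial is $x^{[n]}=x\,(x+\tfrac n2-1)(x+\tfrac n2-2)\cdots(x-\tfrac n2+1)$ (a product of $n$ factors), and $x^{[0]}=1$. The central factorial numbers of the second kind $T(n,k)$ ($0\le k\le n$) are defined by $x^n=\sum_{k=0}^n T(n,k)\,x^{[k]}$; equivalently $T(n,k)=\frac1{k!}\sum_{j=0}^k(-1)^j\binom kj\left(\frac k2-j\right)^n$, and $T(n,k)=0$ for $k>n$. The $n$th central Fubini-like polynomial is $\mathfrak{C}_n(x)=\sum_{k=0}^n k!\,T(n,k)\,x^k$. *)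

theory Defs
  imports Complex_Main
begin

definition central_fact_T :: "nat \<Rightarrow> nat \<Rightarrow> real" where
  "central_fact_T n k =
     (\<Sum>j\<le>k. (-1)^j * real (k choose j) * (real k / 2 - real j) ^ n) / fact k"

definition central_fubini :: "nat \<Rightarrow> real \<Rightarrow> real" where
  "central_fubini n x = (\<Sum>k\<le>n. fact k * central_fact_T n k * x ^ k)"

end

theory Submission
  imports Defs
begin

text \<open>With \<open>\<delta> f (a) = f (a + 1/2) - f (a - 1/2)\<close>, the number \<open>k! T(n,k)\<close> is \<open>\<delta>\<^sup>k\<close> applied to
  \<open>a\<^sup>n\<close> at \<open>a = 0\<close>. Expanding \<open>\<delta> a\<^sup>n = \<Sum>\<^sub>m (n choose m) ((1/2)\<^sup>m - (-1/2)\<^sup>m) a\<^sup>n\<^sup>-\<^sup>m\<close> and using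
  \<open>\<delta>\<^sup>k\<^sup>+\<^sup>1 = \<delta>\<^sup>k \<circ> \<delta>\<close> gives a recursion for \<open>k! T(n,k)\<close> in \<open>k\<close>. Summing it against \<open>x\<^sup>k\<^sup>+\<^sup>1\<close>
  gives the theorem: only odd \<open>m = 2k+1\<close> survive, with coefficient \<open>2 (1/2)\<^sup>2\<^sup>k\<^sup>+\<^sup>1 = 4\<^sup>-\<^sup>k\<close>.\<close>

lemma sum_alternating_binomial_Suc:
  fixes g :: "nat \<Rightarrow> 'a :: comm_ring_1"
  shows "(\<Sum>j\<le>Suc k. (-1)^j * of_nat (Suc k choose j) * g j)
       = (\<Sum>j\<le>k. (-1)^j * of_nat (k choose j) * (g j - g (Suc j)))"
proof -
  define S where "S = (\<Sum>j\<le>k. (-1)^j * of_nat (k choose j) * g j)"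
  define S' where "S' = (\<Sum>j\<le>k. (-1)^j * of_nat (k choose j) * g (Suc j))"
  define S'' where "S'' = (\<Sum>j\<le>k. (-1)^j * of_nat (k choose Suc j) * g (Suc j))"
  have "(\<Sum>j\<le>Suc k. (-1)^j * of_nat (Suc k choose j) * g j) = g 0 - S' - S''"
    unfolding S'_def S''_def
    by (simp add: sum.atMost_Suc_shift sum.distrib[symmetric] sum_negf[symmetric]
          sum_subtractf[symmetric] algebra_simps del: sum.atMost_Suc)
  moreover have "S = g 0 - S''"
  proof -
    have "S = (\<Sum>j\<le>Suc k. (-1)^j * of_nat (k choose j) * g j)"
      unfolding S_def by (simp add: binomial_eq_0)
    then show ?thesis
      unfolding S''_def
      by (simp add: sum.atMost_Suc_shift sum_negf[symmetric] sum_subtractf[symmetric]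
            del: sum.atMost_Suc)
  qed
  moreover have "(\<Sum>j\<le>k. (-1)^j * of_nat (k choose j) * (g j - g (Suc j))) = S - S'"
    unfolding S_def S'_def by (simp add: sum_subtractf[symmetric] algebra_simps)
  ultimately show ?thesis by simp
qed

definition central_diff_power :: "nat \<Rightarrow> nat \<Rightarrow> real" where
  "central_diff_power n k = (\<Sum>j\<le>k. (-1)^j * real (k choose j) * (real k / 2 - real j) ^ n)"

lemma fact_mult_central_fact_T: "fact k * central_fact_T n k = central_diff_power n k"
  by (simp add: central_fact_T_def central_diff_power_def)

definition half_power_diff :: "nat \<Rightarrow> real" where
  "half_power_diff m = (1/2)^m - (-1/2)^m"

lemma half_power_diff_even: "even m \<Longrightarrow> half_power_diff m = 0"
  by (simp add: half_power_diff_def power_minus_even)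

lemma half_power_diff_odd: "half_power_diff (2 * k + 1) = 1 / 4 ^ k"
  by (simp add: half_power_diff_def power_mult power_divide)

lemma power_half_shift_diff:
  fixes a :: real
  shows "(a + 1/2)^n - (a - 1/2)^n = (\<Sum>m\<le>n. real (n choose m) * half_power_diff m * a^(n-m))"
  using binomial_ring[of "1/2" a n] binomial_ring[of "-1/2" a n]
  by (simp add: half_power_diff_def sum_subtractf[symmetric] algebra_simps)

lemma central_diff_power_Suc:
  "central_diff_power n (Suc k)
     = (\<Sum>m\<le>n. real (n choose m) * half_power_diff m * central_diff_power (n - m) k)"
proof -
  have "central_diff_power n (Suc k) = (\<Sum>j\<le>k. (-1)^j * real (k choose j) *
      ((real (Suc k) / 2 - real j)^n - (real (Suc k) / 2 - real (Suc j))^n))"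
    unfolding central_diff_power_def by (rule sum_alternating_binomial_Suc)
  also have "\<dots> = (\<Sum>j\<le>k. (-1)^j * real (k choose j) *
      (\<Sum>m\<le>n. real (n choose m) * half_power_diff m * (real k / 2 - real j)^(n-m)))"
  proof (rule sum.cong[OF refl])
    fix j
    have "real (Suc k) / 2 - real j = (real k / 2 - real j) + 1/2"
      and "real (Suc k) / 2 - real (Suc j) = (real k / 2 - real j) - 1/2"
      by simp_all
    then show "(-1)^j * real (k choose j) *
        ((real (Suc k) / 2 - real j)^n - (real (Suc k) / 2 - real (Suc j))^n)
      = (-1)^j * real (k choose j) *
        (\<Sum>m\<le>n. real (n choose m) * half_power_diff m * (real k / 2 - real j)^(n-m))"
      by (simp only: power_half_shift_diff)
  qed
  also have "\<dots> = (\<Sum>m\<le>n. real (n choose m) * half_power_diff m * central_diff_power (n - m) k)"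
    unfolding central_diff_power_def sum_distrib_left
    by (subst sum.swap) (simp add: algebra_simps)
  finally show ?thesis .
qed

lemma central_diff_power_eq_0: "p < k \<Longrightarrow> central_diff_power p k = 0"
proof (induction p arbitrary: k rule: less_induct)
  case (less p)
  then obtain k' where k: "k = Suc k'"
    by (cases k) auto
  have terms_vanish: "real (p choose m) * half_power_diff m * central_diff_power (p - m) k' = 0"
    if "m \<le> p" for m
  proof (cases m)
    case 0
    then show ?thesis by (simp add: half_power_diff_even)
  next
    case (Suc m')
    with less.prems k that have "central_diff_power (p - m) k' = 0"
      by (intro less.IH) auto
    then show ?thesis by simp
  qed
  then show ?case
    unfolding k central_diff_power_Suc by (intro sum.neutral) auto
qed

lemma central_fubini_eq_sum_atMost:
  assumes "n \<le> N"
  shows "central_fubini n x = (\<Sum>k\<le>N. central_diff_power n k * x ^ k)"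
proof -
  have "central_fubini n x = (\<Sum>k\<le>n. central_diff_power n k * x ^ k)"
    by (simp add: central_fubini_def fact_mult_central_fact_T)
  also have "\<dots> = (\<Sum>k\<le>N. central_diff_power n k * x ^ k)"
    using assms by (intro sum.mono_neutral_left) (auto simp: central_diff_power_eq_0)
  finally show ?thesis .
qed

lemma central_fubini_Suc:
  "central_fubini (Suc n) x
     = x * (\<Sum>m\<le>Suc n. real (Suc n choose m) * half_power_diff m * central_fubini (Suc n - m) x)"
proof -
  have "central_fubini (Suc n) x = (\<Sum>k\<le>Suc n. central_diff_power (Suc n) k * x ^ k)"
    by (rule central_fubini_eq_sum_atMost) simp
  also have "\<dots> = (\<Sum>k\<le>n. central_diff_power (Suc n) (Suc k) * x ^ Suc k)"
    by (simp add: sum.atMost_Suc_shift central_diff_power_def del: sum.atMost_Suc)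
  also have "\<dots> = x * (\<Sum>m\<le>Suc n. real (Suc n choose m) * half_power_diff m
                       * (\<Sum>k\<le>n. central_diff_power (Suc n - m) k * x ^ k))"
    by (simp add: central_diff_power_Suc sum_distrib_left sum_distrib_right sum.swap[of _ "{..n}"]
          algebra_simps)
  also have "\<dots> = x * (\<Sum>m\<le>Suc n. real (Suc n choose m) * half_power_diff m
                       * central_fubini (Suc n - m) x)"
  proof (intro arg_cong[where f = "(*) x"] sum.cong refl)
    fix m
    assume "m \<in> {..Suc n}"
    then show "real (Suc n choose m) * half_power_diff m
          * (\<Sum>k\<le>n. central_diff_power (Suc n - m) k * x ^ k)
        = real (Suc n choose m) * half_power_diff m * central_fubini (Suc n - m) x"
      by (cases "m = 0") (simp_all add: half_power_diff_even central_fubini_eq_sum_atMost[of _ n])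
  qed
  finally show ?thesis .
qed

lemma sum_atMost_Suc_odd:
  assumes "\<And>m. even m \<Longrightarrow> g m = 0"
  shows "(\<Sum>m\<le>Suc n. g m) = (\<Sum>k\<le>n div 2. g (2 * k + 1))"
proof -
  have "(\<Sum>k\<le>n div 2. g (2 * k + 1)) = (\<Sum>m\<in>(\<lambda>k. 2 * k + 1) ` {..n div 2}. g m)"
    by (subst sum.reindex) (auto simp: inj_on_def)
  also have "\<dots> = (\<Sum>m\<le>Suc n. g m)"
  proof (intro sum.mono_neutral_left)
    show "\<forall>m\<in>{..Suc n} - (\<lambda>k. 2 * k + 1) ` {..n div 2}. g m = 0"
    proof
      fix m
      assume m: "m \<in> {..Suc n} - (\<lambda>k. 2 * k + 1) ` {..n div 2}"
      have "even m"
      proof (rule ccontr)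
        assume "odd m"
        then obtain k where "m = 2 * k + 1"
          by (rule oddE)
        with m show False
          by auto
      qed
      then show "g m = 0"
        by (rule assms)
    qed
  qed auto
  finally show ?thesis ..
qed

theorem theorem11:
  fixes n :: nat and x :: real
  shows "central_fubini (n + 1) x =
    x * (\<Sum>k\<le>n div 2. (1 / 4 ^ k) * real ((n + 1) choose (2 * k + 1))
                          * central_fubini (n - 2 * k) x)"
proof -
  have "central_fubini (n + 1) x
      = x * (\<Sum>m\<le>Suc n. real (Suc n choose m) * half_power_diff m
                              * central_fubini (Suc n - m) x)"
    by (simp add: central_fubini_Suc)
  also have "\<dots> = x * (\<Sum>k\<le>n div 2. real (Suc n choose (2 * k + 1))
                         * half_power_diff (2 * k + 1) * central_fubini (Suc n - (2 * k + 1)) x)"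
    by (subst sum_atMost_Suc_odd) (simp_all add: half_power_diff_even)
  also have "\<dots> = x * (\<Sum>k\<le>n div 2. (1 / 4 ^ k) * real ((n + 1) choose (2 * k + 1))
                                  * central_fubini (n - 2 * k) x)"
    by (intro arg_cong[where f = "(*) x"] sum.cong refl)
      (simp only: half_power_diff_odd Suc_eq_plus1 add_diff_cancel_right
        mult.commute[of "real _" "1 / 4 ^ _"])
  finally show ?thesis .
qed

end
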